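(* Let $E(\Gamma)$ denote a random variable with the stationary distribution $\pi_\Gamma$ of the chain $\{E_k(\Gamma)\}$. Then (i) $E(\Gamma)\le_{st}E(\Gamma+1)$ for every $\Gamma>0$, and, with $E_0(\Gamma)=0$, $E_k(\Gamma)\le_{st}E_k(\Gamma+1)$ for every $k$; (ii) for every $x\ge 0$, $\lim_{\Gamma\to\infty}P(E(\Gamma)\ge x)=1$; (iii) consequently, if $E\sim\pi_\Gamma$, $Y\sim Y_1$ and $X'\sim\mathcal N(0,\mathbb E[Y]-\epsilon)$ are independent, then $\lim_{\Gamma\to\infty}P\big(\sqrt{E+Y}\ge |X'|\big)=1$.
   Context: $\{Y_k\}$ is an i.i.d. sequence of nonnegative random variables with $\mathbb E[Y_k^2]<\infty$; $\{X'_k\}$ is i.i.d. $\mathcal N(0,\mathbb E[Y]-\epsilon)$ independent of $\{Y_k\}$, with $0<\epsilon<\mathbb E[Y]$; $\eta_k=Y_k-X_k'^2$. For $\Gamma>0$ the buffer chain is $E_{k+1}(\Gamma)=\min\{\Gamma,\max\{0,E_k(\Gamma)+\eta_{k+1}\}\}$, which has a unique stationary distribution $\pi_\Gamma$. For real random variables, $A\le_{st}B$ means $P(A>x)\le P(B>x)$ for all $x$. *)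

theory Defs
  imports "HOL-Probability.Probability"
begin

definition buffer_step :: "real \<Rightarrow> real \<Rightarrow> real \<Rightarrow> real" where
  "buffer_step \<Gamma> e x = min \<Gamma> (max 0 (e + x))"

text \<open>The chain started at E_0 = 0, driven by the increments eta k (eta 0 unused).\<close>
fun buffer_chain :: "real \<Rightarrow> (nat \<Rightarrow> 'a \<Rightarrow> real) \<Rightarrow> nat \<Rightarrow> 'a \<Rightarrow> real" where
  "buffer_chain \<Gamma> \<eta> 0 \<omega> = 0"
| "buffer_chain \<Gamma> \<eta> (Suc k) \<omega> = buffer_step \<Gamma> (buffer_chain \<Gamma> \<eta> k \<omega>) (\<eta> (Suc k) \<omega>)"

definition stationary_buffer :: "real measure \<Rightarrow> real \<Rightarrow> real measure \<Rightarrow> bool" where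
  "stationary_buffer \<nu> \<Gamma> \<pi> \<longleftrightarrow>
     prob_space \<pi> \<and> sets \<pi> = sets borel \<and>
     distr (\<pi> \<Otimes>\<^sub>M \<nu>) borel (\<lambda>(e, x). buffer_step \<Gamma> e x) = \<pi>"

definition st_le :: "real measure \<Rightarrow> real measure \<Rightarrow> bool" where
  "st_le \<mu> \<nu> \<longleftrightarrow> (\<forall>x. measure \<mu> {y. y > x} \<le> measure \<nu> {y. y > x})"

end

theory Submission
  imports Defs
begin

text \<open>
  Raising the capacity can only raise the buffer pathwise, which gives the comparison of the
  chains started at 0. For the stationary laws, let \<open>P\<^sub>\<Gamma>\<close> be the transition operator and
  \<open>h\<close> a monotone test function with values in \<open>[0, 1]\<close>. Stationarity gives
  \<open>\<integral>h d\<pi>\<^sub>\<Gamma> = \<integral>P\<^sub>\<Gamma>\<^sup>k h d\<pi>\<^sub>\<Gamma> \<in> [P\<^sub>\<Gamma>\<^sup>k h 0, P\<^sub>\<Gamma>\<^sup>k h \<Gamma>]\<close>; since one increment \<open>\<eta> \<le> -\<Gamma>\<close>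
  empties the buffer from every state, the width of this interval is at most
  \<open>P(\<eta> > -\<Gamma>)\<^sup>k \<rightarrow> 0\<close>, while \<open>P\<^sub>\<Gamma>\<^sup>k h 0 \<le> P\<^sub>\<Gamma>\<^sub>+\<^sub>1\<^sup>k h 0\<close> by pathwise monotonicity.

  For the tails, the drift of \<open>(\<Gamma> - e)\<^sup>2\<close> under one step is at most
  \<open>-2 E[\<eta>] (\<Gamma> - e) + E[\<eta>\<^sup>2]\<close>, so stationarity and \<open>E[\<eta>] = \<epsilon> > 0\<close> give
  \<open>E[\<Gamma> - E(\<Gamma>)] \<le> E[\<eta>\<^sup>2] / (2\<epsilon>)\<close>, and Markov's inequality yields
  \<open>P(E(\<Gamma>) < x) = O(1 / (\<Gamma> - x))\<close>. The last claim follows because \<open>Y \<ge> 0\<close> and \<open>X'\<close> is tight.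
\<close>

section \<open>The buffer recursion\<close>

lemma measurable_buffer_step [measurable]:
  assumes [measurable]: "f \<in> borel_measurable M" "g \<in> borel_measurable M"
  shows "(\<lambda>\<omega>. buffer_step \<Gamma> (f \<omega>) (g \<omega>)) \<in> borel_measurable M"
  unfolding buffer_step_def by measurable

lemma buffer_step_bounds:
  assumes "0 \<le> \<Gamma>"
  shows "0 \<le> buffer_step \<Gamma> e x" "buffer_step \<Gamma> e x \<le> \<Gamma>"
  using assms unfolding buffer_step_def by auto

lemma buffer_step_mono: "e \<le> e' \<Longrightarrow> \<Gamma> \<le> \<Gamma>' \<Longrightarrow> buffer_step \<Gamma> e x \<le> buffer_step \<Gamma>' e' x"
  unfolding buffer_step_def by auto

lemma buffer_step_eq_0: "e \<le> \<Gamma> \<Longrightarrow> 0 \<le> \<Gamma> \<Longrightarrow> x \<le> -\<Gamma> \<Longrightarrow> buffer_step \<Gamma> e x = 0"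
  unfolding buffer_step_def by auto

lemma buffer_chain_mono_capacity:
  "\<Gamma> \<le> \<Gamma>' \<Longrightarrow> buffer_chain \<Gamma> \<eta> k \<omega> \<le> buffer_chain \<Gamma>' \<eta> k \<omega>"
  by (induction k) (simp_all add: buffer_step_mono)

lemma measurable_buffer_chain [measurable]:
  assumes [measurable]: "\<And>k. \<eta> k \<in> borel_measurable M"
  shows "buffer_chain \<Gamma> \<eta> k \<in> borel_measurable M"
proof (induction k)
  case (Suc k)
  note [measurable] = Suc
  have "buffer_chain \<Gamma> \<eta> (Suc k) = (\<lambda>\<omega>. buffer_step \<Gamma> (buffer_chain \<Gamma> \<eta> k \<omega>) (\<eta> (Suc k) \<omega>))"
    by auto
  also have "\<dots> \<in> borel_measurable M" by measurable
  finally show ?case .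
qed simp

lemma (in prob_space) st_le_distr_mono:
  assumes [measurable]: "X \<in> borel_measurable M" "X' \<in> borel_measurable M"
    and le: "\<And>\<omega>. \<omega> \<in> space M \<Longrightarrow> X \<omega> \<le> X' \<omega>"
  shows "st_le (distr M borel X) (distr M borel X')"
  unfolding st_le_def
proof
  fix x :: real
  have "prob (X -` {y. y > x} \<inter> space M) \<le> prob (X' -` {y. y > x} \<inter> space M)"
    using le by (intro finite_measure_mono) (auto intro: less_le_trans)
  then show "measure (distr M borel X) {y. y > x} \<le> measure (distr M borel X') {y. y > x}"
    by (simp add: measure_distr)
qed

lemma prob_space_stationary_buffer: "stationary_buffer \<nu> \<Gamma> \<pi> \<Longrightarrow> prob_space \<pi>"
  and sets_stationary_buffer: "stationary_buffer \<nu> \<Gamma> \<pi> \<Longrightarrow> sets \<pi> = sets borel"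
  unfolding stationary_buffer_def by auto

definition unit_mono :: "(real \<Rightarrow> real) \<Rightarrow> bool" where
  "unit_mono h \<longleftrightarrow> mono h \<and> (\<forall>x. 0 \<le> h x \<and> h x \<le> 1)"

lemma unit_mono_borel_measurable: "unit_mono h \<Longrightarrow> h \<in> borel_measurable borel"
  unfolding unit_mono_def using borel_measurable_mono by blast

lemma unit_mono_indicator_greater: "unit_mono (indicator {y. x < y})"
  unfolding unit_mono_def mono_def by (auto simp: indicator_def)

lemma integral_unit_mono_bounds:
  assumes "prob_space \<pi>" "sets \<pi> = sets borel" and h: "unit_mono h"
    and supp: "AE e in \<pi>. 0 \<le> e \<and> e \<le> \<Gamma>"
  shows "h 0 \<le> (\<integral>e. h e \<partial>\<pi>)" "(\<integral>e. h e \<partial>\<pi>) \<le> h \<Gamma>"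
proof -
  interpret prob_space \<pi> by fact
  note [measurable_cong] = \<open>sets \<pi> = sets borel\<close>
  note [measurable] = unit_mono_borel_measurable[OF h]
  have int: "integrable \<pi> h"
    by (rule integrable_const_bound[where B=1]) (use h in \<open>auto simp: unit_mono_def\<close>)
  show "h 0 \<le> (\<integral>e. h e \<partial>\<pi>)"
    by (rule integral_ge_const[OF int]) (use supp h in \<open>auto simp: unit_mono_def mono_def\<close>)
  show "(\<integral>e. h e \<partial>\<pi>) \<le> h \<Gamma>"
    by (rule integral_le_const[OF int]) (use supp h in \<open>auto simp: unit_mono_def mono_def\<close>)
qed

section \<open>Stationary laws\<close>

locale buffer_increments = prob_space \<nu> for \<nu> :: "real measure" +
  assumes sets_eq_borel [measurable_cong]: "sets \<nu> = sets borel"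
begin

definition transition :: "real \<Rightarrow> (real \<Rightarrow> real) \<Rightarrow> real \<Rightarrow> real" where
  "transition \<Gamma> h e = (\<integral>x. h (buffer_step \<Gamma> e x) \<partial>\<nu>)"

lemma integrable_bounded_step:
  fixes h :: "real \<Rightarrow> real"
  assumes [measurable]: "h \<in> borel_measurable borel" and "\<And>y. \<bar>h y\<bar> \<le> B"
  shows "integrable \<nu> (\<lambda>x. h (buffer_step \<Gamma> e x))"
  by (rule integrable_const_bound[where B=B]) (use assms in auto)

lemma integrable_unit_mono_step:
  "unit_mono h \<Longrightarrow> integrable \<nu> (\<lambda>x. h (buffer_step \<Gamma> e x))"
  using unit_mono_borel_measurable[of h]
  by (intro integrable_bounded_step[where B=1]) (auto simp: unit_mono_def)

lemma transition_mono:
  assumes h: "unit_mono h" "unit_mono h'" and le: "\<And>e. h e \<le> h' e" and "\<Gamma> \<le> \<Gamma>'" "e \<le> e'"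
  shows "transition \<Gamma> h e \<le> transition \<Gamma>' h' e'"
  unfolding transition_def
proof (intro integral_mono integrable_unit_mono_step h)
  fix x
  have "h (buffer_step \<Gamma> e x) \<le> h (buffer_step \<Gamma>' e' x)"
    using h(1) buffer_step_mono[OF \<open>e \<le> e'\<close> \<open>\<Gamma> \<le> \<Gamma>'\<close>] unfolding unit_mono_def mono_def by blast
  also have "\<dots> \<le> h' (buffer_step \<Gamma>' e' x)" by (rule le)
  finally show "h (buffer_step \<Gamma> e x) \<le> h' (buffer_step \<Gamma>' e' x)" .
qed

lemma unit_mono_transition:
  assumes h: "unit_mono h"
  shows "unit_mono (transition \<Gamma> h)"
proof -
  have "mono (transition \<Gamma> h)"
    by (intro monoI transition_mono h) auto
  moreover have "0 \<le> transition \<Gamma> h e \<and> transition \<Gamma> h e \<le> 1" for e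
  proof
    show "0 \<le> transition \<Gamma> h e"
      unfolding transition_def using h by (auto simp: unit_mono_def)
    show "transition \<Gamma> h e \<le> 1"
      unfolding transition_def
      by (intro integral_le_const integrable_unit_mono_step h) (use h in \<open>auto simp: unit_mono_def\<close>)
  qed
  ultimately show ?thesis by (simp add: unit_mono_def)
qed

lemma unit_mono_transition_iter: "unit_mono h \<Longrightarrow> unit_mono ((transition \<Gamma> ^^ k) h)"
  by (induction k) (auto intro: unit_mono_transition)

lemma transition_iter_mono_capacity:
  assumes "unit_mono h" "\<Gamma> \<le> \<Gamma>'"
  shows "(transition \<Gamma> ^^ k) h e \<le> (transition \<Gamma>' ^^ k) h e"
proof (induction k arbitrary: e)
  case (Suc k)
  then show ?case
    using transition_mono[OF unit_mono_transition_iter unit_mono_transition_iter] assms by simp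
qed simp

text \<open>A single increment below \<open>-\<Gamma>\<close> empties the buffer from every state, which is where
  the two extreme states couple.\<close>
lemma transition_oscillation:
  assumes h: "unit_mono h" and "0 < \<Gamma>"
  shows "transition \<Gamma> h \<Gamma> - transition \<Gamma> h 0 \<le> (1 - measure \<nu> {x. x \<le> -\<Gamma>}) * (h \<Gamma> - h 0)"
proof -
  have "transition \<Gamma> h \<Gamma> - transition \<Gamma> h 0 = (\<integral>x. h (buffer_step \<Gamma> \<Gamma> x) - h (buffer_step \<Gamma> 0 x) \<partial>\<nu>)"
    unfolding transition_def by (intro Bochner_Integration.integral_diff[symmetric] integrable_unit_mono_step h)
  also have "\<dots> \<le> (\<integral>x. (h \<Gamma> - h 0) * indicator {x. -\<Gamma> < x} x \<partial>\<nu>)"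
  proof (intro integral_mono Bochner_Integration.integrable_diff integrable_unit_mono_step h)
    show "integrable \<nu> (\<lambda>x. (h \<Gamma> - h 0) * indicator {x. -\<Gamma> < x} x)"
      by (intro integrable_mult_right integrable_real_indicator) (auto simp: emeasure_eq_measure)
    fix x
    show "h (buffer_step \<Gamma> \<Gamma> x) - h (buffer_step \<Gamma> 0 x) \<le> (h \<Gamma> - h 0) * indicator {x. -\<Gamma> < x} x"
    proof (cases "x \<le> -\<Gamma>")
      case True
      then show ?thesis using \<open>0 < \<Gamma>\<close> by (simp add: buffer_step_eq_0)
    next
      case False
      have "h (buffer_step \<Gamma> \<Gamma> x) \<le> h \<Gamma>" "h 0 \<le> h (buffer_step \<Gamma> 0 x)"
        using h buffer_step_bounds[of \<Gamma>] \<open>0 < \<Gamma>\<close> unfolding unit_mono_def mono_def by auto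
      then show ?thesis using False by simp
    qed
  qed
  also have "\<dots> = (h \<Gamma> - h 0) * measure \<nu> {x. -\<Gamma> < x}" by simp
  also have "{x. -\<Gamma> < x} = space \<nu> - {x. x \<le> -\<Gamma>}"
    by (auto simp: sets_eq_imp_space_eq[OF sets_eq_borel])
  also have "measure \<nu> \<dots> = 1 - measure \<nu> {x. x \<le> -\<Gamma>}"
    by (rule prob_compl) simp
  finally show ?thesis by (simp add: mult.commute)
qed

lemma transition_iter_oscillation:
  assumes h: "unit_mono h" and "0 < \<Gamma>"
  shows "(transition \<Gamma> ^^ k) h \<Gamma> - (transition \<Gamma> ^^ k) h 0 \<le> (1 - measure \<nu> {x. x \<le> -\<Gamma>}) ^ k"
proof (induction k)
  case 0
  have "h \<Gamma> \<le> 1" "0 \<le> h 0" using h by (auto simp: unit_mono_def)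
  then show ?case by simp
next
  case (Suc k)
  have "(transition \<Gamma> ^^ Suc k) h \<Gamma> - (transition \<Gamma> ^^ Suc k) h 0
      \<le> (1 - measure \<nu> {x. x \<le> -\<Gamma>}) * ((transition \<Gamma> ^^ k) h \<Gamma> - (transition \<Gamma> ^^ k) h 0)"
    using transition_oscillation[OF unit_mono_transition_iter[OF h] \<open>0 < \<Gamma>\<close>] by simp
  also have "\<dots> \<le> (1 - measure \<nu> {x. x \<le> -\<Gamma>}) * (1 - measure \<nu> {x. x \<le> -\<Gamma>}) ^ k"
    by (intro mult_left_mono Suc) (simp add: prob_le_1)
  finally show ?case by simp
qed

lemma integrable_transition:
  fixes h :: "real \<Rightarrow> real"
  assumes "prob_space \<pi>" "sets \<pi> = sets borel"
    and [measurable]: "h \<in> borel_measurable borel" and bound: "\<And>y. \<bar>h y\<bar> \<le> B"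
  shows "integrable \<pi> (transition \<Gamma> h)"
proof -
  interpret \<pi>: prob_space \<pi> by fact
  note [measurable_cong] = \<open>sets \<pi> = sets borel\<close>
  have "\<bar>transition \<Gamma> h e\<bar> \<le> B" for e
  proof -
    have "\<bar>transition \<Gamma> h e\<bar> \<le> (\<integral>x. \<bar>h (buffer_step \<Gamma> e x)\<bar> \<partial>\<nu>)"
      unfolding transition_def by (rule integral_abs_bound)
    also have "\<dots> \<le> B"
      using bound by (intro integral_le_const integrable_abs integrable_bounded_step[OF _ bound]) simp_all
    finally show ?thesis .
  qed
  then show ?thesis
    unfolding transition_def by (intro \<pi>.integrable_const_bound[where B=B]) (auto, measurable)
qed

lemma
  fixes h :: "real \<Rightarrow> real"
  assumes st: "stationary_buffer \<nu> \<Gamma> \<pi>"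
  shows AE_stationary_buffer_bounds: "0 \<le> \<Gamma> \<Longrightarrow> AE e in \<pi>. 0 \<le> e \<and> e \<le> \<Gamma>"
    and stationary_buffer_integral:
      "h \<in> borel_measurable borel \<Longrightarrow> (\<And>y. \<bar>h y\<bar> \<le> B) \<Longrightarrow>
        (\<integral>e. h e \<partial>\<pi>) = (\<integral>e. transition \<Gamma> h e \<partial>\<pi>)"
proof -
  interpret \<pi>: prob_space \<pi> using prob_space_stationary_buffer[OF st] .
  interpret pair_prob_space \<pi> \<nu> ..
  note [measurable_cong] = sets_stationary_buffer[OF st]
  have \<pi>_eq: "distr (\<pi> \<Otimes>\<^sub>M \<nu>) borel (\<lambda>(e, x). buffer_step \<Gamma> e x) = \<pi>"
    using st unfolding stationary_buffer_def by simp
  have step_measurable [measurable]: "(\<lambda>(e, x). buffer_step \<Gamma> e x) \<in> borel_measurable (\<pi> \<Otimes>\<^sub>M \<nu>)"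
    unfolding case_prod_beta by measurable
  show "AE e in \<pi>. 0 \<le> e \<and> e \<le> \<Gamma>" if "0 \<le> \<Gamma>"
  proof -
    have "AE e in distr (\<pi> \<Otimes>\<^sub>M \<nu>) borel (\<lambda>(e, x). buffer_step \<Gamma> e x). 0 \<le> e \<and> e \<le> \<Gamma>"
      by (subst AE_distr_iff) (auto simp: buffer_step_bounds[OF that])
    then show ?thesis by (simp only: \<pi>_eq)
  qed
  show "(\<integral>e. h e \<partial>\<pi>) = (\<integral>e. transition \<Gamma> h e \<partial>\<pi>)"
    if h_measurable [measurable]: "h \<in> borel_measurable borel" and bound: "\<And>y. \<bar>h y\<bar> \<le> B"
  proof -
    have "(\<integral>e. h e \<partial>\<pi>) = (\<integral>e. h e \<partial>distr (\<pi> \<Otimes>\<^sub>M \<nu>) borel (\<lambda>(e, x). buffer_step \<Gamma> e x))"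
      by (simp only: \<pi>_eq)
    also have "\<dots> = (\<integral>z. h (case z of (e, x) \<Rightarrow> buffer_step \<Gamma> e x) \<partial>(\<pi> \<Otimes>\<^sub>M \<nu>))"
      by (rule integral_distr[OF step_measurable h_measurable])
    also have "\<dots> = (\<integral>e. transition \<Gamma> h e \<partial>\<pi>)"
      unfolding transition_def
      by (subst integral_fst'[symmetric]) (auto intro!: integrable_const_bound[where B=B] simp: bound)
    finally show ?thesis .
  qed
qed

lemma stationary_buffer_integral_transition_iter:
  assumes st: "stationary_buffer \<nu> \<Gamma> \<pi>" and h: "unit_mono h"
  shows "(\<integral>e. h e \<partial>\<pi>) = (\<integral>e. (transition \<Gamma> ^^ k) h e \<partial>\<pi>)"
proof (induction k)
  case (Suc k)
  have hk: "unit_mono ((transition \<Gamma> ^^ k) h)" by (rule unit_mono_transition_iter[OF h])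
  have "(\<integral>e. (transition \<Gamma> ^^ k) h e \<partial>\<pi>) = (\<integral>e. transition \<Gamma> ((transition \<Gamma> ^^ k) h) e \<partial>\<pi>)"
    by (rule stationary_buffer_integral[OF st unit_mono_borel_measurable[OF hk], where B=1])
       (use hk in \<open>auto simp: unit_mono_def\<close>)
  then show ?case using Suc by simp
qed simp

text \<open>Stationarity traps \<open>\<integral>h d\<pi>\<close> between the \<open>k\<close>-step values from the two extreme states,
  whose gap decays geometrically; a larger capacity only raises the value from the empty state.\<close>
lemma stationary_buffer_st_le:
  assumes p: "0 < measure \<nu> {x. x \<le> -\<Gamma>}" and "0 < \<Gamma>" "\<Gamma> \<le> \<Gamma>'"
    and st: "stationary_buffer \<nu> \<Gamma> \<pi>" and st': "stationary_buffer \<nu> \<Gamma>' \<pi>'"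
  shows "st_le \<pi> \<pi>'"
  unfolding st_le_def
proof
  fix x :: real
  define h :: "real \<Rightarrow> real" where "h = indicator {y. x < y}"
  have h: "unit_mono h" unfolding h_def by (rule unit_mono_indicator_greater)
  define q where "q = 1 - measure \<nu> {x. x \<le> -\<Gamma>}"
  have q: "0 \<le> q" "q < 1" using p prob_le_1 unfolding q_def by auto
  have measure_eq: "measure \<rho> {y. y > x} = (\<integral>e. h e \<partial>\<rho>)" if "stationary_buffer \<nu> \<gamma> \<rho>" for \<gamma> \<rho>
    using sets_stationary_buffer[OF that] unfolding h_def by simp
  have "measure \<pi> {y. y > x} \<le> measure \<pi>' {y. y > x} + q ^ k" for k
  proof -
    have "measure \<pi> {y. y > x} = (\<integral>e. (transition \<Gamma> ^^ k) h e \<partial>\<pi>)"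
      using measure_eq[OF st] stationary_buffer_integral_transition_iter[OF st h] by simp
    also have "\<dots> \<le> (transition \<Gamma> ^^ k) h \<Gamma>"
      using \<open>0 < \<Gamma>\<close> by (intro integral_unit_mono_bounds prob_space_stationary_buffer[OF st]
          sets_stationary_buffer[OF st] unit_mono_transition_iter h AE_stationary_buffer_bounds[OF st]) simp
    also have "\<dots> \<le> (transition \<Gamma> ^^ k) h 0 + q ^ k"
      using transition_iter_oscillation[OF h \<open>0 < \<Gamma>\<close>] unfolding q_def by (simp add: algebra_simps)
    also have "(transition \<Gamma> ^^ k) h 0 \<le> (transition \<Gamma>' ^^ k) h 0"
      by (rule transition_iter_mono_capacity[OF h \<open>\<Gamma> \<le> \<Gamma>'\<close>])
    also have "\<dots> \<le> (\<integral>e. (transition \<Gamma>' ^^ k) h e \<partial>\<pi>')"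
      using \<open>0 < \<Gamma>\<close> \<open>\<Gamma> \<le> \<Gamma>'\<close>
      by (intro integral_unit_mono_bounds(1)[where \<Gamma>=\<Gamma>'] prob_space_stationary_buffer[OF st']
          sets_stationary_buffer[OF st'] unit_mono_transition_iter h AE_stationary_buffer_bounds[OF st']) simp
    also have "\<dots> = measure \<pi>' {y. y > x}"
      using measure_eq[OF st'] stationary_buffer_integral_transition_iter[OF st' h] by simp
    finally show ?thesis by simp
  qed
  moreover have "(\<lambda>k. measure \<pi>' {y. y > x} + q ^ k) \<longlonglongrightarrow> measure \<pi>' {y. y > x} + 0"
    by (intro tendsto_add tendsto_const LIMSEQ_power_zero) (use q in simp)
  ultimately show "measure \<pi> {y. y > x} \<le> measure \<pi>' {y. y > x}"
    by (intro LIMSEQ_le_const[where a="measure \<pi> {y. y > x}"]) auto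
qed

lemma integral_square_gap_step_le:
  assumes int2: "integrable \<nu> (\<lambda>x. x\<^sup>2)" and mean: "(\<integral>x. x \<partial>\<nu>) = \<epsilon>"
    and e: "0 \<le> e" "e \<le> \<Gamma>"
  shows "(\<integral>x. (\<Gamma> - buffer_step \<Gamma> e x)\<^sup>2 \<partial>\<nu>) \<le> (\<Gamma> - e)\<^sup>2 - 2 * \<epsilon> * (\<Gamma> - e) + (\<integral>x. x\<^sup>2 \<partial>\<nu>)"
proof -
  have int1: "integrable \<nu> (\<lambda>x. x)"
    by (rule square_integrable_imp_integrable[OF _ int2]) measurable
  have expand: "((\<Gamma> - e) - x)\<^sup>2 = (\<Gamma> - e)\<^sup>2 - 2 * (\<Gamma> - e) * x + x\<^sup>2" for x
    by (simp add: power2_eq_square algebra_simps)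
  have "(\<integral>x. (\<Gamma> - buffer_step \<Gamma> e x)\<^sup>2 \<partial>\<nu>) \<le> (\<integral>x. ((\<Gamma> - e) - x)\<^sup>2 \<partial>\<nu>)"
  proof (rule integral_mono)
    show "integrable \<nu> (\<lambda>x. (\<Gamma> - buffer_step \<Gamma> e x)\<^sup>2)"
      by (rule integrable_const_bound[where B="\<Gamma>\<^sup>2"])
         (use e in \<open>auto simp: buffer_step_def intro!: power_mono\<close>)
    show "integrable \<nu> (\<lambda>x. ((\<Gamma> - e) - x)\<^sup>2)"
      unfolding expand using int1 int2 by simp
    fix x
    have "0 \<le> \<Gamma> - buffer_step \<Gamma> e x" "\<Gamma> - buffer_step \<Gamma> e x \<le> \<bar>(\<Gamma> - e) - x\<bar>"
      using e unfolding buffer_step_def by auto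
    then show "(\<Gamma> - buffer_step \<Gamma> e x)\<^sup>2 \<le> ((\<Gamma> - e) - x)\<^sup>2"
      by (metis power2_abs power_mono)
  qed
  also have "\<dots> = (\<Gamma> - e)\<^sup>2 - 2 * \<epsilon> * (\<Gamma> - e) + (\<integral>x. x\<^sup>2 \<partial>\<nu>)"
    unfolding expand using int1 int2 mean by (simp add: prob_space)
  finally show ?thesis .
qed

text \<open>The clipping in \<open>V\<close> only makes it bounded, as \<open>stationary_buffer_integral\<close> requires;
  on the support \<open>[0, \<Gamma>]\<close> of \<open>\<pi>\<close> it is the Lyapunov function \<open>(\<Gamma> - e)\<^sup>2\<close>.\<close>
lemma stationary_buffer_drift:
  assumes int2: "integrable \<nu> (\<lambda>x. x\<^sup>2)" and mean: "(\<integral>x. x \<partial>\<nu>) = \<epsilon>"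
    and st: "stationary_buffer \<nu> \<Gamma> \<pi>" and "0 \<le> \<Gamma>"
  shows "2 * \<epsilon> * (\<integral>e. \<Gamma> - e \<partial>\<pi>) \<le> (\<integral>x. x\<^sup>2 \<partial>\<nu>)"
proof -
  interpret \<pi>: prob_space \<pi> using prob_space_stationary_buffer[OF st] .
  note [measurable_cong] = sets_stationary_buffer[OF st]
  have supp: "AE e in \<pi>. 0 \<le> e \<and> e \<le> \<Gamma>" by (rule AE_stationary_buffer_bounds[OF st \<open>0 \<le> \<Gamma>\<close>])
  let ?m2 = "\<integral>x. x\<^sup>2 \<partial>\<nu>"
  define V where "V e = (\<Gamma> - min \<Gamma> (max 0 e))\<^sup>2" for e
  have [measurable]: "V \<in> borel_measurable borel" unfolding V_def by measurable
  have V_bound: "\<bar>V e\<bar> \<le> \<Gamma>\<^sup>2" for e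
    using \<open>0 \<le> \<Gamma>\<close> unfolding V_def by (auto intro!: power_mono)
  have V_step: "V (buffer_step \<Gamma> e x) = (\<Gamma> - buffer_step \<Gamma> e x)\<^sup>2" for e x
    using buffer_step_bounds[OF \<open>0 \<le> \<Gamma>\<close>] unfolding V_def by (simp add: max_absorb2 min_absorb2)
  have int_V: "integrable \<pi> V"
    by (rule \<pi>.integrable_const_bound[where B="\<Gamma>\<^sup>2"]) (auto simp: V_bound)
  have int_gap: "integrable \<pi> (\<lambda>e. \<Gamma> - e)"
    by (rule \<pi>.integrable_const_bound[where B=\<Gamma>]) (use supp in auto)
  have int_PV: "integrable \<pi> (transition \<Gamma> V)"
    by (rule integrable_transition[OF \<pi>.prob_space_axioms sets_stationary_buffer[OF st] _ V_bound]) measurable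
  have "(\<integral>e. V e \<partial>\<pi>) = (\<integral>e. transition \<Gamma> V e \<partial>\<pi>)"
    by (rule stationary_buffer_integral[OF st _ V_bound]) measurable
  also have "\<dots> \<le> (\<integral>e. V e - 2 * \<epsilon> * (\<Gamma> - e) + ?m2 \<partial>\<pi>)"
  proof (rule integral_mono_AE[OF int_PV])
    show "integrable \<pi> (\<lambda>e. V e - 2 * \<epsilon> * (\<Gamma> - e) + ?m2)"
      using int_V int_gap by simp
    show "AE e in \<pi>. transition \<Gamma> V e \<le> V e - 2 * \<epsilon> * (\<Gamma> - e) + ?m2"
      using supp
    proof eventually_elim
      case (elim e)
      then have "V e = (\<Gamma> - e)\<^sup>2" by (simp add: V_def)
      with elim show ?case
        by (simp add: transition_def V_step integral_square_gap_step_le[OF int2 mean])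
    qed
  qed
  also have "\<dots> = (\<integral>e. V e \<partial>\<pi>) - 2 * \<epsilon> * (\<integral>e. \<Gamma> - e \<partial>\<pi>) + ?m2"
    using int_V int_gap by (simp add: \<pi>.prob_space)
  finally show ?thesis by simp
qed

lemma stationary_buffer_lower_tail:
  assumes int2: "integrable \<nu> (\<lambda>x. x\<^sup>2)" and mean: "(\<integral>x. x \<partial>\<nu>) = \<epsilon>" and "0 < \<epsilon>"
    and st: "stationary_buffer \<nu> \<Gamma> \<pi>" and "0 \<le> \<Gamma>" "x < \<Gamma>"
  shows "measure \<pi> {e. e < x} \<le> (\<integral>y. y\<^sup>2 \<partial>\<nu>) / (2 * \<epsilon>) / (\<Gamma> - x)"
proof -
  interpret \<pi>: prob_space \<pi> using prob_space_stationary_buffer[OF st] .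
  note [measurable_cong] = sets_stationary_buffer[OF st]
  have supp: "AE e in \<pi>. 0 \<le> e \<and> e \<le> \<Gamma>" by (rule AE_stationary_buffer_bounds[OF st \<open>0 \<le> \<Gamma>\<close>])
  have int_gap: "integrable \<pi> (\<lambda>e. \<Gamma> - e)"
    by (rule \<pi>.integrable_const_bound[where B=\<Gamma>]) (use supp in auto)
  have "measure \<pi> {e. e < x} \<le> measure \<pi> {e \<in> space \<pi>. \<Gamma> - x \<le> \<Gamma> - e}"
    by (intro \<pi>.finite_measure_mono) (auto simp: sets_eq_imp_space_eq[OF sets_stationary_buffer[OF st]])
  also have "\<dots> \<le> (\<integral>e. \<Gamma> - e \<partial>\<pi>) / (\<Gamma> - x)"
    by (rule integral_Markov_inequality_measure[OF int_gap, of "space \<pi>"]) (use supp \<open>x < \<Gamma>\<close> in auto)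
  also have "\<dots> \<le> (\<integral>y. y\<^sup>2 \<partial>\<nu>) / (2 * \<epsilon>) / (\<Gamma> - x)"
    using stationary_buffer_drift[OF int2 mean st \<open>0 \<le> \<Gamma>\<close>] \<open>0 < \<epsilon>\<close> \<open>x < \<Gamma>\<close>
    by (intro divide_right_mono) (simp_all add: pos_le_divide_eq mult.commute)
  finally show ?thesis .
qed

lemma tendsto_stationary_buffer_upper_tail:
  assumes int2: "integrable \<nu> (\<lambda>x. x\<^sup>2)" and mean: "(\<integral>x. x \<partial>\<nu>) = \<epsilon>" and "0 < \<epsilon>"
    and st: "\<And>\<Gamma>. 0 < \<Gamma> \<Longrightarrow> stationary_buffer \<nu> \<Gamma> (\<pi> \<Gamma>)" and "0 \<le> x"
  shows "((\<lambda>\<Gamma>. measure (\<pi> \<Gamma>) {e. x \<le> e}) \<longlongrightarrow> 1) at_top"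
proof (rule tendsto_sandwich)
  define C where "C = (\<integral>y. y\<^sup>2 \<partial>\<nu>) / (2 * \<epsilon>)"
  show "\<forall>\<^sub>F \<Gamma> in at_top. 1 - C / (\<Gamma> - x) \<le> measure (\<pi> \<Gamma>) {e. x \<le> e}"
  proof (intro eventually_at_top_linorderI[of "x + 1"])
    fix \<Gamma> assume "x + 1 \<le> \<Gamma>"
    then have st\<Gamma>: "stationary_buffer \<nu> \<Gamma> (\<pi> \<Gamma>)" using \<open>0 \<le> x\<close> by (intro st) simp
    interpret \<pi>: prob_space "\<pi> \<Gamma>" using prob_space_stationary_buffer[OF st\<Gamma>] .
    have "{e. x \<le> e} = space (\<pi> \<Gamma>) - {e. e < x}"
      by (auto simp: sets_eq_imp_space_eq[OF sets_stationary_buffer[OF st\<Gamma>]])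
    then have "measure (\<pi> \<Gamma>) {e. x \<le> e} = 1 - measure (\<pi> \<Gamma>) {e. e < x}"
      using \<pi>.prob_compl[of "{e. e < x}"] sets_stationary_buffer[OF st\<Gamma>] by simp
    moreover have "measure (\<pi> \<Gamma>) {e. e < x} \<le> C / (\<Gamma> - x)"
      unfolding C_def using \<open>x + 1 \<le> \<Gamma>\<close> \<open>0 \<le> x\<close>
      by (intro stationary_buffer_lower_tail[OF int2 mean \<open>0 < \<epsilon>\<close> st\<Gamma>]) auto
    ultimately show "1 - C / (\<Gamma> - x) \<le> measure (\<pi> \<Gamma>) {e. x \<le> e}" by simp
  qed
  show "\<forall>\<^sub>F \<Gamma> in at_top. measure (\<pi> \<Gamma>) {e. x \<le> e} \<le> 1"
    using eventually_gt_at_top[of 0]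
    by eventually_elim (rule prob_space.prob_le_1[OF prob_space_stationary_buffer[OF st]])
  have "filterlim (\<lambda>\<Gamma>. - x + \<Gamma>) at_top at_top"
    by (rule filterlim_tendsto_add_at_top[OF tendsto_const filterlim_ident])
  then have "((\<lambda>\<Gamma>. C / (\<Gamma> - x)) \<longlongrightarrow> 0) at_top"
    by (intro tendsto_divide_0[OF tendsto_const] filterlim_at_top_imp_at_infinity) simp
  then show "((\<lambda>\<Gamma>. 1 - C / (\<Gamma> - x)) \<longlongrightarrow> 1) at_top"
    using tendsto_diff[OF tendsto_const[of 1]] by fastforce
qed simp

end

section \<open>The product with the input law\<close>

lemma tendsto_measure_abs_le:
  fixes \<mu> :: "real measure"
  assumes "prob_space \<mu>" "sets \<mu> = sets borel"
  shows "(\<lambda>n. measure \<mu> {x. \<bar>x\<bar> \<le> real n}) \<longlonglongrightarrow> 1"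
proof -
  interpret prob_space \<mu> by fact
  have "(\<lambda>n. prob {x. \<bar>x\<bar> \<le> real n}) \<longlonglongrightarrow> prob (\<Union>n. {x. \<bar>x\<bar> \<le> real n})"
  proof (rule finite_Lim_measure_incseq)
    have "{x::real. \<bar>x\<bar> \<le> real n} = {- real n..real n}" for n by auto
    then show "range (\<lambda>n. {x::real. \<bar>x\<bar> \<le> real n}) \<subseteq> events"
      using assms(2) by (simp add: image_subset_iff)
    show "incseq (\<lambda>n. {x::real. \<bar>x\<bar> \<le> real n})"
      by (rule monoI) (auto intro: order_trans)
  qed
  moreover have "(\<Union>n. {x::real. \<bar>x\<bar> \<le> real n}) = space \<mu>"
    by (auto simp: sets_eq_imp_space_eq[OF assms(2)] intro: real_nat_ceiling_ge)
  ultimately show ?thesis by (simp add: prob_space)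
qed

lemma measure_sqrt_ge_abs_lower_bound:
  fixes \<pi> \<mu>Y \<mu>X :: "real measure"
  assumes "prob_space \<pi>" "prob_space \<mu>Y" "prob_space \<mu>X"
    and sets: "sets \<pi> = sets borel" "sets \<mu>Y = sets borel" "sets \<mu>X = sets borel"
    and Y_nonneg: "AE y in \<mu>Y. 0 \<le> y" and "0 \<le> c"
  shows "measure \<pi> {e. c\<^sup>2 \<le> e} * measure \<mu>X {x. \<bar>x\<bar> \<le> c}
    \<le> measure (\<pi> \<Otimes>\<^sub>M (\<mu>Y \<Otimes>\<^sub>M \<mu>X)) {(e, y, x). sqrt (e + y) \<ge> \<bar>x\<bar>}"
proof -
  interpret \<pi>: prob_space \<pi> by fact
  interpret Y: prob_space \<mu>Y by fact
  interpret X: prob_space \<mu>X by fact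
  interpret YX: pair_prob_space \<mu>Y \<mu>X ..
  interpret pair_prob_space \<pi> "\<mu>Y \<Otimes>\<^sub>M \<mu>X" ..
  note [measurable_cong] = sets
  let ?A = "{e. c\<^sup>2 \<le> e} \<times> ({y. 0 \<le> y} \<times> {x. \<bar>x\<bar> \<le> c})"
  have "Y.prob {y. 0 \<le> y} = 1"
    using Y.prob_Collect_eq_1[of "\<lambda>y. 0 \<le> y"] Y_nonneg by (simp add: sets_eq_imp_space_eq[OF sets(2)])
  then have "emeasure (\<pi> \<Otimes>\<^sub>M (\<mu>Y \<Otimes>\<^sub>M \<mu>X)) ?A = \<pi>.prob {e. c\<^sup>2 \<le> e} * X.prob {x. \<bar>x\<bar> \<le> c}"
    by (simp add: YX.emeasure_pair_measure_Times X.emeasure_pair_measure_Times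
        \<pi>.emeasure_eq_measure Y.emeasure_eq_measure X.emeasure_eq_measure ennreal_mult)
  then have "\<pi>.prob {e. c\<^sup>2 \<le> e} * X.prob {x. \<bar>x\<bar> \<le> c} = measure (\<pi> \<Otimes>\<^sub>M (\<mu>Y \<Otimes>\<^sub>M \<mu>X)) ?A"
    by (simp add: measure_def)
  also have "\<dots> \<le> measure (\<pi> \<Otimes>\<^sub>M (\<mu>Y \<Otimes>\<^sub>M \<mu>X)) {(e, y, x). sqrt (e + y) \<ge> \<bar>x\<bar>}"
  proof (rule finite_measure_mono)
    show "?A \<subseteq> {(e, y, x). sqrt (e + y) \<ge> \<bar>x\<bar>}"
    proof safe
      fix e y x :: real assume "c\<^sup>2 \<le> e" "0 \<le> y" "\<bar>x\<bar> \<le> c"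
      then have "sqrt (c\<^sup>2) \<le> sqrt (e + y)" by (intro real_sqrt_le_mono) auto
      then show "\<bar>x\<bar> \<le> sqrt (e + y)" using \<open>\<bar>x\<bar> \<le> c\<close> \<open>0 \<le> c\<close> by simp
    qed
    have "{w \<in> space (\<pi> \<Otimes>\<^sub>M (\<mu>Y \<Otimes>\<^sub>M \<mu>X)). \<bar>snd (snd w)\<bar> \<le> sqrt (fst w + fst (snd w))}
        \<in> sets (\<pi> \<Otimes>\<^sub>M (\<mu>Y \<Otimes>\<^sub>M \<mu>X))" by measurable
    then show "{(e, y, x). sqrt (e + y) \<ge> \<bar>x\<bar>} \<in> sets (\<pi> \<Otimes>\<^sub>M (\<mu>Y \<Otimes>\<^sub>M \<mu>X))"
      by (simp add: space_pair_measure sets_eq_imp_space_eq[OF sets(1)] sets_eq_imp_space_eq[OF sets(2)]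
          sets_eq_imp_space_eq[OF sets(3)] case_prod_beta')
  qed
  finally show ?thesis .
qed

lemma tendsto_measure_sqrt_ge_abs:
  fixes \<pi> :: "real \<Rightarrow> real measure" and \<mu>Y \<mu>X :: "real measure"
  assumes lim: "\<And>x. 0 \<le> x \<Longrightarrow> ((\<lambda>\<Gamma>. measure (\<pi> \<Gamma>) {e. x \<le> e}) \<longlongrightarrow> 1) at_top"
    and \<pi>: "\<And>\<Gamma>. 0 < \<Gamma> \<Longrightarrow> prob_space (\<pi> \<Gamma>)" "\<And>\<Gamma>. 0 < \<Gamma> \<Longrightarrow> sets (\<pi> \<Gamma>) = sets borel"
    and Y: "prob_space \<mu>Y" "sets \<mu>Y = sets borel" "AE y in \<mu>Y. 0 \<le> y"
    and X: "prob_space \<mu>X" "sets \<mu>X = sets borel"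
  shows "((\<lambda>\<Gamma>. measure (\<pi> \<Gamma> \<Otimes>\<^sub>M (\<mu>Y \<Otimes>\<^sub>M \<mu>X)) {(e, y, x). sqrt (e + y) \<ge> \<bar>x\<bar>}) \<longlongrightarrow> 1) at_top"
proof (rule order_tendstoI)
  let ?S = "{(e, y, x). sqrt (e + y) \<ge> \<bar>x\<bar>} :: (real \<times> real \<times> real) set"
  fix l :: real assume "l < 1"
  have "\<forall>\<^sub>F n in sequentially. l < measure \<mu>X {x. \<bar>x\<bar> \<le> real n}"
    using tendsto_measure_abs_le[OF X] \<open>l < 1\<close> by (rule order_tendstoD)
  then obtain n where n: "l < measure \<mu>X {x. \<bar>x\<bar> \<le> real n}"
    by (auto simp: eventually_sequentially)
  have "((\<lambda>\<Gamma>. measure (\<pi> \<Gamma>) {e. (real n)\<^sup>2 \<le> e} * measure \<mu>X {x. \<bar>x\<bar> \<le> real n})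
      \<longlongrightarrow> 1 * measure \<mu>X {x. \<bar>x\<bar> \<le> real n}) at_top"
    by (intro tendsto_mult lim tendsto_const) simp
  then have "\<forall>\<^sub>F \<Gamma> in at_top. l < measure (\<pi> \<Gamma>) {e. (real n)\<^sup>2 \<le> e} * measure \<mu>X {x. \<bar>x\<bar> \<le> real n}"
    using n by (intro order_tendstoD(1)) simp_all
  with eventually_gt_at_top[of 0]
  show "\<forall>\<^sub>F \<Gamma> in at_top. l < measure (\<pi> \<Gamma> \<Otimes>\<^sub>M (\<mu>Y \<Otimes>\<^sub>M \<mu>X)) ?S"
  proof eventually_elim
    case (elim \<Gamma>)
    then show ?case
      using measure_sqrt_ge_abs_lower_bound[OF \<pi>(1)[OF elim(1)] Y(1) X(1) \<pi>(2)[OF elim(1)] Y(2) X(2) Y(3),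
          of "real n"] by simp
  qed
next
  let ?S = "{(e, y, x). sqrt (e + y) \<ge> \<bar>x\<bar>} :: (real \<times> real \<times> real) set"
  fix u :: real assume "1 < u"
  have le_1: "measure (\<pi> \<Gamma> \<Otimes>\<^sub>M (\<mu>Y \<Otimes>\<^sub>M \<mu>X)) ?S \<le> 1" if "0 < \<Gamma>" for \<Gamma>
    using \<pi>(1)[OF that] Y(1) X(1) by (intro prob_space.prob_le_1 prob_space_pair)
  show "\<forall>\<^sub>F \<Gamma> in at_top. measure (\<pi> \<Gamma> \<Otimes>\<^sub>M (\<mu>Y \<Otimes>\<^sub>M \<mu>X)) ?S < u"
    using eventually_gt_at_top[of 0] by eventually_elim (use le_1 \<open>1 < u\<close> in force)
qed

section \<open>The Gaussian model\<close>

lemma (in prob_space) prob_normal_ge_pos: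
  assumes "0 < \<sigma>" and X: "distributed M lborel X (\<lambda>x. ennreal (normal_density \<mu> \<sigma> x))"
  shows "0 < prob (X -` {s..} \<inter> space M)"
proof -
  have "emeasure M (X -` {s..} \<inter> space M) = (\<integral>\<^sup>+x. ennreal (normal_density \<mu> \<sigma> x) * indicator {s..} x \<partial>lborel)"
    by (rule distributed_emeasure[OF X]) simp
  moreover have "(\<integral>\<^sup>+x. ennreal (normal_density \<mu> \<sigma> x) * indicator {s..} x \<partial>lborel) \<noteq> 0"
  proof
    assume "(\<integral>\<^sup>+x. ennreal (normal_density \<mu> \<sigma> x) * indicator {s..} x \<partial>lborel) = 0"
    then have "AE x in lborel. ennreal (normal_density \<mu> \<sigma> x) * indicator {s..} x = 0"
      by (subst (asm) nn_integral_0_iff_AE) auto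
    then have "AE x in lborel. x < s"
    proof eventually_elim
      case (elim x)
      then show ?case using normal_density_pos[OF \<open>0 < \<sigma>\<close>, of \<mu> x] by (auto split: split_indicator_asm)
    qed
    then have "emeasure lborel {x. \<not> x < s} = 0"
      by (subst (asm) AE_iff_measurable[of "{x. \<not> x < s}"]) auto
    moreover have "emeasure lborel {s..s + 1} \<le> emeasure lborel {x. \<not> x < s}"
      by (rule emeasure_mono) auto
    ultimately show False by simp
  qed
  ultimately have "prob (X -` {s..} \<inter> space M) \<noteq> 0"
    by (metis emeasure_eq_measure ennreal_0)
  then show ?thesis by (simp add: order_less_le)
qed

locale buffer_model = prob_space M for M :: "'a measure" +
  fixes Y X' :: "nat \<Rightarrow> 'a \<Rightarrow> real" and \<epsilon> :: real
  assumes indep: "indep_vars (\<lambda>_. borel) (\<lambda>i. case i of Inl k \<Rightarrow> Y k | Inr k \<Rightarrow> X' k) UNIV"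
    and Y_id: "\<And>k. distr M borel (Y k) = distr M borel (Y 0)"
    and Y_nonneg: "\<And>k. AE \<omega> in M. 0 \<le> Y k \<omega>"
    and Y_square: "integrable M (\<lambda>\<omega>. (Y 0 \<omega>)\<^sup>2)"
    and \<epsilon>_pos: "0 < \<epsilon>" and \<epsilon>_less: "\<epsilon> < expectation (Y 0)"
    and X'_normal: "\<And>k. distributed M lborel (X' k)
                      (\<lambda>x. ennreal (normal_density 0 (sqrt (expectation (Y 0) - \<epsilon>)) x))"
begin

lemma measurable_Y [measurable]: "Y k \<in> borel_measurable M"
  and measurable_X' [measurable]: "X' k \<in> borel_measurable M"
proof -
  have "(case i of Inl k \<Rightarrow> Y k | Inr k \<Rightarrow> X' k) \<in> borel_measurable M" for i
    using indep unfolding indep_vars_def by blast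
  from this[of "Inl k"] this[of "Inr k"] show "Y k \<in> borel_measurable M" "X' k \<in> borel_measurable M"
    by simp_all
qed

lemma integrable_Y_square: "integrable M (\<lambda>\<omega>. (Y k \<omega>)\<^sup>2)"
proof -
  have "integrable (distr M borel (Y 0)) (\<lambda>y. y\<^sup>2)"
    using Y_square by (subst integrable_distr_eq) auto
  then have "integrable (distr M borel (Y k)) (\<lambda>y. y\<^sup>2)" by (simp only: Y_id[of k])
  then show ?thesis by (subst (asm) integrable_distr_eq) auto
qed

lemma integrable_Y: "integrable M (Y k)"
  by (rule square_integrable_imp_integrable[OF measurable_Y integrable_Y_square])

lemma expectation_Y: "expectation (Y k) = expectation (Y 0)"
proof -
  have "expectation (Y k) = (\<integral>y. y \<partial>distr M borel (Y k))" by (simp add: integral_distr)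
  also have "\<dots> = (\<integral>y. y \<partial>distr M borel (Y 0))" by (simp only: Y_id[of k])
  finally show ?thesis by (simp add: integral_distr)
qed

lemma
  shows integrable_X'_power: "integrable M (\<lambda>\<omega>. X' k \<omega> ^ n)"
    and expectation_X'_square: "expectation (\<lambda>\<omega>. (X' k \<omega>)\<^sup>2) = expectation (Y 0) - \<epsilon>"
proof -
  define \<sigma> where "\<sigma> = sqrt (expectation (Y 0) - \<epsilon>)"
  have "0 < \<sigma>" "\<sigma>\<^sup>2 = expectation (Y 0) - \<epsilon>" using \<epsilon>_less unfolding \<sigma>_def by simp_all
  have X: "distributed M lborel (X' k) (normal_density 0 \<sigma>)" using X'_normal unfolding \<sigma>_def by simp
  show "integrable M (\<lambda>\<omega>. X' k \<omega> ^ n)"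
    using \<open>0 < \<sigma>\<close> integrable_normal_moment[where \<mu>=0 and \<sigma>=\<sigma> and k=n] distributed_integrable[OF X, of "\<lambda>x. x ^ n"] by simp
  have "expectation (X' k) = 0" by (rule normal_distributed_expectation[OF \<open>0 < \<sigma>\<close> X])
  then have "expectation (\<lambda>\<omega>. (X' k \<omega>)\<^sup>2) = variance (X' k)" by simp
  also have "\<dots> = \<sigma>\<^sup>2" by (rule normal_distributed_variance[OF \<open>0 < \<sigma>\<close> X])
  finally show "expectation (\<lambda>\<omega>. (X' k \<omega>)\<^sup>2) = expectation (Y 0) - \<epsilon>"
    using \<open>\<sigma>\<^sup>2 = _\<close> by simp
qed

lemma integrable_increment_square: "integrable M (\<lambda>\<omega>. (Y k \<omega> - (X' k \<omega>)\<^sup>2)\<^sup>2)"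
proof (rule Bochner_Integration.integrable_bound)
  show "integrable M (\<lambda>\<omega>. 2 * (Y k \<omega>)\<^sup>2 + 2 * X' k \<omega> ^ 4)"
    by (intro Bochner_Integration.integrable_add integrable_mult_right integrable_Y_square integrable_X'_power)
  show "AE \<omega> in M. norm ((Y k \<omega> - (X' k \<omega>)\<^sup>2)\<^sup>2) \<le> norm (2 * (Y k \<omega>)\<^sup>2 + 2 * X' k \<omega> ^ 4)"
  proof (rule AE_I2)
    fix \<omega>
    have "(Y k \<omega> - (X' k \<omega>)\<^sup>2)\<^sup>2 + (Y k \<omega> + (X' k \<omega>)\<^sup>2)\<^sup>2 = 2 * (Y k \<omega>)\<^sup>2 + 2 * X' k \<omega> ^ 4"
      by (simp add: power2_eq_square power4_eq_xxxx algebra_simps)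
    then have "(Y k \<omega> - (X' k \<omega>)\<^sup>2)\<^sup>2 \<le> 2 * (Y k \<omega>)\<^sup>2 + 2 * X' k \<omega> ^ 4"
      using zero_le_power2[of "Y k \<omega> + (X' k \<omega>)\<^sup>2"] by linarith
    then show "norm ((Y k \<omega> - (X' k \<omega>)\<^sup>2)\<^sup>2) \<le> norm (2 * (Y k \<omega>)\<^sup>2 + 2 * X' k \<omega> ^ 4)"
      by simp
  qed
  show "(\<lambda>\<omega>. (Y k \<omega> - (X' k \<omega>)\<^sup>2)\<^sup>2) \<in> borel_measurable M"
    by measurable
qed

lemma expectation_increment: "expectation (\<lambda>\<omega>. Y k \<omega> - (X' k \<omega>)\<^sup>2) = \<epsilon>"
proof -
  have "expectation (\<lambda>\<omega>. Y k \<omega> - (X' k \<omega>)\<^sup>2) = expectation (Y k) - expectation (\<lambda>\<omega>. (X' k \<omega>)\<^sup>2)"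
    by (rule Bochner_Integration.integral_diff[OF integrable_Y integrable_X'_power])
  then show ?thesis unfolding expectation_Y[of k] expectation_X'_square by linarith
qed

lemma prob_Y_X'_indep:
  assumes "S \<in> sets borel" "T \<in> sets borel"
  shows "prob ((Y k -` S \<inter> space M) \<inter> (X' k -` T \<inter> space M))
    = prob (Y k -` S \<inter> space M) * prob (X' k -` T \<inter> space M)"
proof -
  let ?Z = "\<lambda>i. case i of Inl k \<Rightarrow> Y k | Inr k \<Rightarrow> X' k"
  let ?A = "\<lambda>i. case i of Inl _ \<Rightarrow> S | Inr _ \<Rightarrow> T"
  have "prob (\<Inter>i\<in>{Inl k, Inr k}. ?Z i -` ?A i \<inter> space M) = (\<Prod>i\<in>{Inl k, Inr k}. prob (?Z i -` ?A i \<inter> space M))"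
    by (rule indep_varsD[OF indep]) (use assms in \<open>auto split: sum.split\<close>)
  then show ?thesis by simp
qed

text \<open>A small \<open>Y\<close> together with a large \<open>X'\<close> forces a large negative increment; the two
  events are independent and each has positive probability (Markov's inequality, resp. a
  positive normal density).\<close>
lemma prob_increment_le_pos: "0 < prob {\<omega> \<in> space M. Y k \<omega> - (X' k \<omega>)\<^sup>2 \<le> -\<Gamma>}"
proof -
  define c where "c = expectation (Y 0) + 1"
  define s where "s = sqrt (c + \<bar>\<Gamma>\<bar>)"
  have "0 < c" using \<epsilon>_pos \<epsilon>_less unfolding c_def by simp
  define A where "A = Y k -` {..<c} \<inter> space M"
  define B where "B = X' k -` {s..} \<inter> space M"
  have "prob {\<omega> \<in> space M. c \<le> Y k \<omega>} \<le> expectation (Y k) / c"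
    using Y_nonneg \<open>0 < c\<close> by (intro integral_Markov_inequality_measure[OF integrable_Y, of "space M"]) auto
  also have "\<dots> < 1" using \<open>0 < c\<close> unfolding c_def expectation_Y[of k] by simp
  finally have "prob {\<omega> \<in> space M. c \<le> Y k \<omega>} < 1" .
  moreover have "A = space M - {\<omega> \<in> space M. c \<le> Y k \<omega>}" unfolding A_def by auto
  ultimately have "0 < prob A" using prob_compl[of "{\<omega> \<in> space M. c \<le> Y k \<omega>}"] by simp
  moreover have "0 < prob B"
    unfolding B_def using \<epsilon>_less by (intro prob_normal_ge_pos[OF _ X'_normal]) simp
  moreover have "prob (A \<inter> B) = prob A * prob B"
    unfolding A_def B_def by (rule prob_Y_X'_indep) simp_all
  moreover have "A \<inter> B \<subseteq> {\<omega> \<in> space M. Y k \<omega> - (X' k \<omega>)\<^sup>2 \<le> -\<Gamma>}"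
  proof safe
    fix \<omega> assume "\<omega> \<in> A" "\<omega> \<in> B"
    then have "Y k \<omega> < c" "s \<le> X' k \<omega>" unfolding A_def B_def by auto
    have "c + \<bar>\<Gamma>\<bar> = s\<^sup>2" using \<open>0 < c\<close> unfolding s_def by simp
    also have "\<dots> \<le> (X' k \<omega>)\<^sup>2" using \<open>s \<le> X' k \<omega>\<close> using \<open>0 < c\<close> by (intro power_mono) (simp_all add: s_def)
    finally have "c + \<bar>\<Gamma>\<bar> \<le> (X' k \<omega>)\<^sup>2" .
    with \<open>Y k \<omega> < c\<close> show "Y k \<omega> - (X' k \<omega>)\<^sup>2 \<le> -\<Gamma>" by linarith
  qed (auto simp: A_def)
  then have "prob (A \<inter> B) \<le> prob {\<omega> \<in> space M. Y k \<omega> - (X' k \<omega>)\<^sup>2 \<le> -\<Gamma>}"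
    by (intro finite_measure_mono) auto
  ultimately show ?thesis using mult_pos_pos[of "prob A" "prob B"] by linarith
qed

lemma buffer_increments_law: "buffer_increments (distr M borel (\<lambda>\<omega>. Y k \<omega> - (X' k \<omega>)\<^sup>2))"
proof (rule buffer_increments.intro)
  show "prob_space (distr M borel (\<lambda>\<omega>. Y k \<omega> - (X' k \<omega>)\<^sup>2))"
    by (rule prob_space_distr) measurable
qed (unfold_locales, simp)

lemma
  shows integrable_increment_law_square:
      "integrable (distr M borel (\<lambda>\<omega>. Y k \<omega> - (X' k \<omega>)\<^sup>2)) (\<lambda>x. x\<^sup>2)"
    and integral_increment_law: "(\<integral>x. x \<partial>distr M borel (\<lambda>\<omega>. Y k \<omega> - (X' k \<omega>)\<^sup>2)) = \<epsilon>"
    and increment_law_left_tail_pos: "0 < measure (distr M borel (\<lambda>\<omega>. Y k \<omega> - (X' k \<omega>)\<^sup>2)) {x. x \<le> -\<Gamma>}"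
proof -
  show "integrable (distr M borel (\<lambda>\<omega>. Y k \<omega> - (X' k \<omega>)\<^sup>2)) (\<lambda>x. x\<^sup>2)"
    by (rule integrable_distr_eq[THEN iffD2]) (measurable, measurable, rule integrable_increment_square)
  have "(\<integral>x. x \<partial>distr M borel (\<lambda>\<omega>. Y k \<omega> - (X' k \<omega>)\<^sup>2)) = expectation (\<lambda>\<omega>. Y k \<omega> - (X' k \<omega>)\<^sup>2)"
    by (rule integral_distr) measurable
  then show "(\<integral>x. x \<partial>distr M borel (\<lambda>\<omega>. Y k \<omega> - (X' k \<omega>)\<^sup>2)) = \<epsilon>"
    by (simp only: expectation_increment)
  have "measure (distr M borel (\<lambda>\<omega>. Y k \<omega> - (X' k \<omega>)\<^sup>2)) {x. x \<le> -\<Gamma>}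
      = prob ((\<lambda>\<omega>. Y k \<omega> - (X' k \<omega>)\<^sup>2) -` {x. x \<le> -\<Gamma>} \<inter> space M)"
    by (rule measure_distr) measurable
  also have "(\<lambda>\<omega>. Y k \<omega> - (X' k \<omega>)\<^sup>2) -` {x. x \<le> -\<Gamma>} \<inter> space M
      = {\<omega> \<in> space M. Y k \<omega> - (X' k \<omega>)\<^sup>2 \<le> -\<Gamma>}"
    by auto
  finally show "0 < measure (distr M borel (\<lambda>\<omega>. Y k \<omega> - (X' k \<omega>)\<^sup>2)) {x. x \<le> -\<Gamma>}"
    using prob_increment_le_pos[of k \<Gamma>] by simp
qed

end

theorem mainTheorem4:
  fixes M :: "'a measure"
    and Y X' :: "nat \<Rightarrow> 'a \<Rightarrow> real"
    and \<epsilon> :: real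
    and \<pi> :: "real \<Rightarrow> real measure"
  assumes "prob_space M"
    and indep: "prob_space.indep_vars M (\<lambda>_. borel)
                  (\<lambda>i. case i of Inl k \<Rightarrow> Y k | Inr k \<Rightarrow> X' k) (UNIV :: (nat + nat) set)"
    and Y_id: "\<forall>k. distr M borel (Y k) = distr M borel (Y 0)"
    and Y_nonneg: "\<forall>k. AE \<omega> in M. Y k \<omega> \<ge> 0"
    and Y_sq: "integrable M (\<lambda>\<omega>. (Y 0 \<omega>)\<^sup>2)"
    and eps: "0 < \<epsilon>" "\<epsilon> < prob_space.expectation M (Y 0)"
    and X'_normal: "\<forall>k. distributed M lborel (X' k)
                  (\<lambda>x. ennreal (normal_density 0 (sqrt (prob_space.expectation M (Y 0) - \<epsilon>)) x))"
    and \<pi>_stat: "\<forall>\<Gamma>>0. stationary_buffer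
                  (distr M borel (\<lambda>\<omega>. Y 1 \<omega> - (X' 1 \<omega>)\<^sup>2)) \<Gamma> (\<pi> \<Gamma>)"
  shows "(\<forall>\<Gamma>>0. st_le (\<pi> \<Gamma>) (\<pi> (\<Gamma> + 1)))
       \<and> (\<forall>\<Gamma>>0. \<forall>k. st_le
             (distr M borel (buffer_chain \<Gamma> (\<lambda>k \<omega>. Y k \<omega> - (X' k \<omega>)\<^sup>2) k))
             (distr M borel (buffer_chain (\<Gamma> + 1) (\<lambda>k \<omega>. Y k \<omega> - (X' k \<omega>)\<^sup>2) k)))
       \<and> (\<forall>x\<ge>0. ((\<lambda>\<Gamma>. measure (\<pi> \<Gamma>) {e. e \<ge> x}) \<longlongrightarrow> 1) at_top)
       \<and> ((\<lambda>\<Gamma>. measure (\<pi> \<Gamma> \<Otimes>\<^sub>M (distr M borel (Y 1) \<Otimes>\<^sub>M distr M borel (X' 1)))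
                {(e, y, x). sqrt (e + y) \<ge> \<bar>x\<bar>}) \<longlongrightarrow> 1) at_top"
proof -
  interpret prob_space M by fact
  interpret buffer_model M Y X' \<epsilon>
    using assms by unfold_locales simp_all
  let ?\<nu> = "distr M borel (\<lambda>\<omega>. Y 1 \<omega> - (X' 1 \<omega>)\<^sup>2)"
  interpret \<nu>: buffer_increments ?\<nu> by (rule buffer_increments_law)
  have st: "\<And>\<Gamma>. 0 < \<Gamma> \<Longrightarrow> stationary_buffer ?\<nu> \<Gamma> (\<pi> \<Gamma>)" using \<pi>_stat by blast
  have tail: "((\<lambda>\<Gamma>. measure (\<pi> \<Gamma>) {e. e \<ge> x}) \<longlongrightarrow> 1) at_top" if "0 \<le> x" for x
    by (rule \<nu>.tendsto_stationary_buffer_upper_tail[OF integrable_increment_law_square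
          integral_increment_law \<epsilon>_pos st that])
  show ?thesis
  proof (intro conjI allI impI)
    fix \<Gamma> :: real assume "0 < \<Gamma>"
    then show "st_le (\<pi> \<Gamma>) (\<pi> (\<Gamma> + 1))"
      using \<nu>.stationary_buffer_st_le[OF increment_law_left_tail_pos _ _ st st, of \<Gamma> "\<Gamma> + 1"] by simp
    fix k
    show "st_le (distr M borel (buffer_chain \<Gamma> (\<lambda>k \<omega>. Y k \<omega> - (X' k \<omega>)\<^sup>2) k))
        (distr M borel (buffer_chain (\<Gamma> + 1) (\<lambda>k \<omega>. Y k \<omega> - (X' k \<omega>)\<^sup>2) k))"
      by (rule st_le_distr_mono) (measurable, measurable, simp add: buffer_chain_mono_capacity)
  next
    fix x :: real assume "0 \<le> x"
    then show "((\<lambda>\<Gamma>. measure (\<pi> \<Gamma>) {e. e \<ge> x}) \<longlongrightarrow> 1) at_top" by (rule tail)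
  next
    show "((\<lambda>\<Gamma>. measure (\<pi> \<Gamma> \<Otimes>\<^sub>M (distr M borel (Y 1) \<Otimes>\<^sub>M distr M borel (X' 1)))
        {(e, y, x). sqrt (e + y) \<ge> \<bar>x\<bar>}) \<longlongrightarrow> 1) at_top"
      by (intro tendsto_measure_sqrt_ge_abs tail prob_space_stationary_buffer[OF st]
          sets_stationary_buffer[OF st] prob_space_distr)
         (simp_all add: AE_distr_iff Y_nonneg)
  qed
qed

end
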